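(* Let $c\in\mathbb{Q}$ and, for $n\ge1$, $\psi_n^{(c)}=R_y\phi_{n-1}^{(c)}R_x$. Then $\psi_1^{(c)}=R_{xy}$ and for $n\ge2$, $$\psi_n^{(c)}=\frac{1}{n-1}\Bigl([\theta^{(c)},\psi_{n-1}^{(c)}]-\tfrac12\bigl(R_z\psi_{n-1}^{(c)}+\psi_{n-1}^{(c)}R_z\bigr)-c\,\psi_{n-1}^{(c)}\partial_1\Bigr).$$
   Context: Let $\mathfrak{H}=\mathbb{Q}\langle x,y\rangle$, $z=x+y$. Products of operators denote composition, $[A,B]=AB-BA$. $R_w(w')=w'w$ (right multiplication). $H$ is the $\mathbb{Q}$-linear map with $H(w)=\deg(w)w$ for words $w$. $\partial_1$ is the derivation with $\partial_1(x)=xy$, $\partial_1(y)=-xy$. For $c\in\mathbb{Q}$, $\theta^{(c)}$ is the unique $\mathbb{Q}$-linear map with $\theta^{(c)}(x)=\frac12(xz+zx)$, $\theta^{(c)}(y)=\frac12(yz+zy)$ and $\theta^{(c)}(ww')=\theta^{(c)}(w)w'+w\theta^{(c)}(w')+c\,\partial_1(w)H(w')$. The operators $\phi_n^{(c)}$ ($n\ge0$) are defined by $\phi_0^{(c)}=\mathrm{id}_{\mathfrak{H}}$ and $\phi_n^{(c)}=\frac1n\bigl([\theta^{(c)},\phi_{n-1}^{(c)}]+\frac12(R_z\phi_{n-1}^{(c)}+\phi_{n-1}^{(c)}R_z)+c\,\partial_1\phi_{n-1}^{(c)}\bigr)$ for $n\ge1$. *)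

theory Defs
  imports Complex_Main "HOL-Library.Poly_Mapping"
begin

text \<open>The free algebra Q<x,y>: finitely supported Q-valued functions on words.\<close>

datatype letter = LX | LY

type_synonym hf = "letter list \<Rightarrow>\<^sub>0 rat"

definition wd :: "letter list \<Rightarrow> hf" where
  "wd u = Poly_Mapping.single u 1"

definition sc :: "rat \<Rightarrow> hf \<Rightarrow> hf" where
  "sc a p = Poly_Mapping.map (\<lambda>b. a * b) p"

definition lin :: "(letter list \<Rightarrow> hf) \<Rightarrow> hf \<Rightarrow> hf" where
  "lin f p = (\<Sum>u\<in>Poly_Mapping.keys p. sc (Poly_Mapping.lookup p u) (f u))"

definition hmul :: "hf \<Rightarrow> hf \<Rightarrow> hf" where
  "hmul p q = lin (\<lambda>u. lin (\<lambda>v. wd (u @ v)) q) p"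

definition hx :: hf where "hx = wd [LX]"
definition hy :: hf where "hy = wd [LY]"
definition hz :: hf where "hz = hx + hy"

definition Rm :: "hf \<Rightarrow> hf \<Rightarrow> hf" where
  "Rm w p = hmul p w"

definition Hop :: "hf \<Rightarrow> hf" where
  "Hop = lin (\<lambda>u. sc (of_nat (length u)) (wd u))"

fun d1l :: "letter \<Rightarrow> hf" where
  "d1l LX = wd [LX, LY]"
| "d1l LY = - wd [LX, LY]"

fun d1w :: "letter list \<Rightarrow> hf" where
  "d1w [] = 0"
| "d1w (a # u) = hmul (d1l a) (wd u) + hmul (wd [a]) (d1w u)"

definition d1 :: "hf \<Rightarrow> hf" where
  "d1 = lin d1w"

text \<open>theta^(c) on letters and on words (recursion on the first letter, a special case
  of the defining rule theta(ww') = theta(w)w' + w theta(w') + c d1(w) H(w')).\<close>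
definition thl :: "letter \<Rightarrow> hf" where
  "thl a = sc (1/2) (hmul (wd [a]) hz + hmul hz (wd [a]))"

fun thw :: "rat \<Rightarrow> letter list \<Rightarrow> hf" where
  "thw c [] = 0"
| "thw c (a # u) = hmul (thl a) (wd u) + hmul (wd [a]) (thw c u)
                    + sc c (hmul (d1l a) (Hop (wd u)))"

definition theta :: "rat \<Rightarrow> hf \<Rightarrow> hf" where
  "theta c = lin (thw c)"

text \<open>phi_n^(c); products of operators are compositions.\<close>
fun phi :: "rat \<Rightarrow> nat \<Rightarrow> hf \<Rightarrow> hf" where
  "phi c 0 = id"
| "phi c (Suc n) = (\<lambda>p. sc (1 / of_nat (Suc n))
      (theta c (phi c n p) - phi c n (theta c p)
       + sc (1/2) (Rm hz (phi c n p) + phi c n (Rm hz p))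
       + sc c (d1 (phi c n p))))"

definition psi :: "rat \<Rightarrow> nat \<Rightarrow> hf \<Rightarrow> hf" where
  "psi c n = Rm hy \<circ> phi c (n - 1) \<circ> Rm hx"

end

theory Submission imports Defs begin

(*
  The operator identity is a formal consequence of two facts.

  (1) The map theta^(c), defined on words by recursion on the first letter, satisfies
      the twisted Leibniz rule of the paper for arbitrary elements p, q:
        theta(p q) = theta(p) q + p theta(q) + c d1(p) H(q).
      For a single letter a this gives theta(q a) = theta(q) a + 1/2 q (a z + z a) + c d1(q) a.
  (2) For every linear operator Phi, conjugating one step of the phi-recursion,
        [theta, Phi] + 1/2 (R_z Phi + Phi R_z) + c d1 Phi,
      by the sandwich R_y (_) R_x yields the corresponding step of the psi-recursion,
        [theta, Psi] - 1/2 (R_z Psi + Psi R_z) - c Psi d1,   Psi = R_y Phi R_x.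
      This is (1) applied once with a = y (moving theta past R_y) and once with a = x
      (moving theta past R_x), followed by cancellation.
*)

lemma lookup_sc [simp]: "Poly_Mapping.lookup (sc a p) k = a * Poly_Mapping.lookup p k"
  unfolding sc_def by (simp add: Poly_Mapping.map.rep_eq when_def)

lemma sc_zero [simp]: "sc 0 p = 0"
  by (rule poly_mapping_eqI) simp

lemma sc_zero_right [simp]: "sc a 0 = 0"
  by (rule poly_mapping_eqI) simp

lemma sc_one [simp]: "sc 1 p = p"
  by (rule poly_mapping_eqI) simp

lemma sc_minus_one: "sc (-1) p = - p"
  by (rule poly_mapping_eqI) simp

lemma sc_add: "sc a (p + q) = sc a p + sc a q"
  by (rule poly_mapping_eqI) (simp add: lookup_add algebra_simps)

lemma sc_diff: "sc a (p - q) = sc a p - sc a q"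
  by (rule poly_mapping_eqI) (simp add: lookup_minus algebra_simps)

lemma sc_add_scalar: "sc (a + b) p = sc a p + sc b p"
  by (rule poly_mapping_eqI) (simp add: lookup_add algebra_simps)

lemma lookup_lin:
  assumes "finite S" "Poly_Mapping.keys p \<subseteq> S"
  shows "Poly_Mapping.lookup (lin f p) v
         = (\<Sum>u\<in>S. Poly_Mapping.lookup p u * Poly_Mapping.lookup (f u) v)"
proof -
  have "Poly_Mapping.lookup (lin f p) v
        = (\<Sum>u\<in>Poly_Mapping.keys p. Poly_Mapping.lookup p u * Poly_Mapping.lookup (f u) v)"
    unfolding lin_def by (simp add: lookup_sum)
  also have "\<dots> = (\<Sum>u\<in>S. Poly_Mapping.lookup p u * Poly_Mapping.lookup (f u) v)"
    using assms by (intro sum.mono_neutral_left) (auto simp: in_keys_iff)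
  finally show ?thesis .
qed

lemma lookup_wd: "Poly_Mapping.lookup (wd u) v = (if u = v then 1 else 0)"
  unfolding wd_def by (simp add: lookup_single)

lemma lin_wd [simp]: "lin f (wd u) = f u"
  unfolding lin_def wd_def by simp

lemma lin_wd_id: "lin wd p = p"
proof (rule poly_mapping_eqI)
  fix v
  have "Poly_Mapping.lookup (lin wd p) v
        = (\<Sum>u\<in>insert v (Poly_Mapping.keys p). Poly_Mapping.lookup p u * Poly_Mapping.lookup (wd u) v)"
    by (rule lookup_lin) (simp_all add: subset_insertI)
  also have "\<dots> = Poly_Mapping.lookup p v"
    by (simp add: lookup_wd sum.remove[of _ v] if_distrib cong: if_cong)
  finally show "Poly_Mapping.lookup (lin wd p) v = Poly_Mapping.lookup p v" .
qed

lemma lin_add: "lin f (p + q) = lin f p + lin f q"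
proof (rule poly_mapping_eqI)
  fix v
  let ?S = "Poly_Mapping.keys p \<union> Poly_Mapping.keys q"
  have "Poly_Mapping.keys (p + q) \<subseteq> ?S" by (rule keys_add)
  then show "Poly_Mapping.lookup (lin f (p + q)) v = Poly_Mapping.lookup (lin f p + lin f q) v"
    by (simp add: lookup_add lookup_lin[of ?S] distrib_right sum.distrib)
qed

lemma lin_sc: "lin f (sc a p) = sc a (lin f p)"
proof (rule poly_mapping_eqI)
  fix v
  have "Poly_Mapping.keys (sc a p) \<subseteq> Poly_Mapping.keys p" by (auto simp: in_keys_iff)
  then show "Poly_Mapping.lookup (lin f (sc a p)) v = Poly_Mapping.lookup (sc a (lin f p)) v"
    by (simp add: lookup_lin[of "Poly_Mapping.keys p"] sum_distrib_left mult.assoc)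
qed

lemma lin_fun_add: "lin (\<lambda>u. f u + g u) p = lin f p + lin g p"
  by (rule poly_mapping_eqI)
    (simp add: lookup_add lookup_lin[of "Poly_Mapping.keys p"] distrib_left sum.distrib)

lemma lin_fun_sc: "lin (\<lambda>u. sc a (f u)) p = sc a (lin f p)"
  by (rule poly_mapping_eqI)
    (simp add: lookup_lin[of "Poly_Mapping.keys p"] sum_distrib_left algebra_simps)

definition linop :: "(hf \<Rightarrow> hf) \<Rightarrow> bool" where
  "linop T \<longleftrightarrow> (\<forall>p q. T (p + q) = T p + T q) \<and> (\<forall>a p. T (sc a p) = sc a (T p))"

lemma linop_add: "linop T \<Longrightarrow> T (p + q) = T p + T q"
  unfolding linop_def by blast

lemma linop_sc: "linop T \<Longrightarrow> T (sc a p) = sc a (T p)"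
  unfolding linop_def by blast

lemma linop_zero: "linop T \<Longrightarrow> T 0 = 0"
  using linop_sc[of T 0 0] by simp

lemma linop_uminus: "linop T \<Longrightarrow> T (- p) = - T p"
  using linop_sc[of T "-1" p] by (simp add: sc_minus_one)

lemma linop_diff: "linop T \<Longrightarrow> T (p - q) = T p - T q"
  using linop_add[of T p "- q"] linop_uminus[of T q] by simp

lemma linop_lin: "linop (lin f)"
  by (simp add: linop_def lin_add lin_sc)

lemma linop_id: "linop (\<lambda>p. p)"
  by (simp add: linop_def)

lemma linop_comp: "linop S \<Longrightarrow> linop T \<Longrightarrow> linop (\<lambda>p. S (T p))"
  by (simp add: linop_def)

lemma linop_plus: "linop S \<Longrightarrow> linop T \<Longrightarrow> linop (\<lambda>p. S p + T p)"
  by (simp add: linop_def sc_add algebra_simps)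

lemma linop_minus: "linop S \<Longrightarrow> linop T \<Longrightarrow> linop (\<lambda>p. S p - T p)"
  by (simp add: linop_def sc_diff algebra_simps)

lemma linop_scale: "linop S \<Longrightarrow> linop (\<lambda>p. sc a (S p))"
  unfolding linop_def by (auto simp: poly_mapping_eq_iff lookup_add fun_eq_iff algebra_simps)

lemma linop_sum: "linop T \<Longrightarrow> T (sum g A) = (\<Sum>x\<in>A. T (g x))"
  by (induction A rule: infinite_finite_induct) (simp_all add: linop_zero[of T] linop_add[of T])

lemma linop_ext:
  assumes "linop S" "linop T" "\<And>u. S (wd u) = T (wd u)"
  shows "S p = T p"
proof -
  have on_lin: "R (lin wd p) = lin (\<lambda>u. R (wd u)) p" if "linop R" for R
    unfolding lin_def by (simp add: linop_sum[OF that] linop_sc[OF that])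
  have "S p = lin (\<lambda>u. S (wd u)) p" using on_lin[OF assms(1)] by (simp add: lin_wd_id)
  also have "\<dots> = lin (\<lambda>u. T (wd u)) p" using assms(3) by simp
  also have "\<dots> = T p" using on_lin[OF assms(2)] by (simp add: lin_wd_id)
  finally show ?thesis .
qed

lemma linop_theta: "linop (theta c)"
  unfolding theta_def by (rule linop_lin)

lemma linop_d1: "linop d1"
  unfolding d1_def by (rule linop_lin)

lemma linop_Hop: "linop Hop"
  unfolding Hop_def by (rule linop_lin)

lemma theta_wd [simp]: "theta c (wd u) = thw c u"
  by (simp add: theta_def)

lemma d1_wd [simp]: "d1 (wd u) = d1w u"
  by (simp add: d1_def)

lemma Hop_wd [simp]: "Hop (wd u) = sc (of_nat (length u)) (wd u)"
  by (simp add: Hop_def)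

text \<open>Concatenation is bilinear, associative and unital; bilinearity is read off from its
  definition as an iterated linear extension, associativity from the extension principle.\<close>
lemma hmul_wd [simp]: "hmul (wd u) (wd v) = wd (u @ v)"
  by (simp add: hmul_def)

lemma linop_hmul_left: "linop (\<lambda>p. hmul p q)"
  unfolding hmul_def by (rule linop_lin)

lemma linop_hmul_right: "linop (\<lambda>q. hmul p q)"
  unfolding hmul_def linop_def by (simp add: lin_add lin_sc lin_fun_add lin_fun_sc)

lemmas hmul_add_left = linop_add[OF linop_hmul_left]
  and hmul_add_right = linop_add[OF linop_hmul_right]
  and hmul_sc_left = linop_sc[OF linop_hmul_left]
  and hmul_sc_right = linop_sc[OF linop_hmul_right]
  and hmul_diff_left = linop_diff[OF linop_hmul_left]
  and hmul_zero_left = linop_zero[OF linop_hmul_left]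
  and hmul_zero_right = linop_zero[OF linop_hmul_right]

lemma hmul_assoc: "hmul (hmul p q) r = hmul p (hmul q r)"
proof -
  have words: "hmul (hmul (wd u) (wd v)) r = hmul (wd u) (hmul (wd v) r)" for u v
    unfolding hmul_wd
    by (rule linop_ext[OF linop_hmul_right linop_comp[OF linop_hmul_right linop_hmul_right]])
      (simp add: append_assoc)
  have word: "hmul (hmul (wd u) q) r = hmul (wd u) (hmul q r)" for u
    by (rule linop_ext[OF linop_comp[OF linop_hmul_left linop_hmul_right]
          linop_comp[OF linop_hmul_right linop_hmul_left]])
      (rule words)
  show ?thesis
    by (rule linop_ext[OF linop_comp[OF linop_hmul_left linop_hmul_left] linop_hmul_left])
      (rule word)
qed

lemma hmul_unit_left [simp]: "hmul (wd []) p = p"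
  by (rule linop_ext[OF linop_hmul_right linop_id]) simp

lemma hmul_unit_right [simp]: "hmul p (wd []) = p"
  by (rule linop_ext[OF linop_hmul_left linop_id]) simp

section \<open>The twisted Leibniz rule for theta\<close>

text \<open>H is a derivation on words: deg(uv) = deg(u) + deg(v).\<close>
lemma Hop_word_append:
  "Hop (wd (u @ v)) = hmul (Hop (wd u)) (wd v) + hmul (wd u) (Hop (wd v))"
  by (simp add: hmul_sc_left hmul_sc_right sc_add_scalar[symmetric] add.commute)

text \<open>On words, theta(u v) = theta(u) v + u theta(v) + c d1(u) H(v); the recursive
  definition of theta is the special case where u is a single letter.\<close>
lemma thw_append:
  "thw c (u @ v) = hmul (thw c u) (wd v) + hmul (wd u) (thw c v) + sc c (hmul (d1w u) (Hop (wd v)))"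
proof (induction u)
  case Nil
  show ?case by (simp add: hmul_zero_left)
next
  case (Cons a u)
  have "thw c ((a # u) @ v)
        = hmul (thl a) (hmul (wd u) (wd v))
          + hmul (wd [a]) (hmul (thw c u) (wd v) + hmul (wd u) (thw c v)
                           + sc c (hmul (d1w u) (Hop (wd v))))
          + sc c (hmul (d1l a) (hmul (Hop (wd u)) (wd v) + hmul (wd u) (Hop (wd v))))"
    by (simp del: Hop_wd add: Cons.IH Hop_word_append)
  also have "\<dots> = hmul (hmul (thl a) (wd u) + hmul (wd [a]) (thw c u)
                           + sc c (hmul (d1l a) (Hop (wd u)))) (wd v)
                   + hmul (hmul (wd [a]) (wd u)) (thw c v)
                   + sc c (hmul (hmul (d1l a) (wd u) + hmul (wd [a]) (d1w u)) (Hop (wd v)))"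
    by (simp del: hmul_wd Hop_wd add: hmul_add_left hmul_add_right hmul_sc_left hmul_sc_right
        hmul_assoc sc_add algebra_simps)
  also have "\<dots> = hmul (thw c (a # u)) (wd v) + hmul (wd (a # u)) (thw c v)
                   + sc c (hmul (d1w (a # u)) (Hop (wd v)))"
    by simp
  finally show ?case .
qed

text \<open>The defining rule of theta^(c) from the paper, for arbitrary elements: both
  sides are bilinear in p and q and agree on pairs of words.\<close>
lemma theta_hmul:
  "theta c (hmul p q) = hmul (theta c p) q + hmul p (theta c q) + sc c (hmul (d1 p) (Hop q))"
proof -
  have word_left: "theta c (hmul (wd u) q)
      = hmul (theta c (wd u)) q + hmul (wd u) (theta c q) + sc c (hmul (d1 (wd u)) (Hop q))" for u
  proof (rule linop_ext[where S = "\<lambda>q. theta c (hmul (wd u) q)"])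
    show "linop (\<lambda>q. theta c (hmul (wd u) q))"
      by (rule linop_comp[OF linop_theta linop_hmul_right])
    show "linop (\<lambda>q. hmul (theta c (wd u)) q + hmul (wd u) (theta c q)
                     + sc c (hmul (d1 (wd u)) (Hop q)))"
      by (intro linop_plus linop_scale linop_hmul_right
          linop_comp[OF linop_hmul_right linop_theta] linop_comp[OF linop_hmul_right linop_Hop])
  qed (simp del: Hop_wd add: thw_append)
  show ?thesis
  proof (rule linop_ext[where S = "\<lambda>p. theta c (hmul p q)"])
    show "linop (\<lambda>p. theta c (hmul p q))"
      by (rule linop_comp[OF linop_theta linop_hmul_left])
    show "linop (\<lambda>p. hmul (theta c p) q + hmul p (theta c q) + sc c (hmul (d1 p) (Hop q)))"
      by (intro linop_plus linop_scale linop_hmul_left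
          linop_comp[OF linop_hmul_left linop_theta] linop_comp[OF linop_hmul_left linop_d1])
  qed (rule word_left)
qed

lemma theta_hmul_letter:
  "theta c (hmul q (wd [a])) = hmul (theta c q) (wd [a])
     + sc (1/2) (hmul q (hmul (wd [a]) hz) + hmul q (hmul hz (wd [a])))
     + sc c (hmul (d1 q) (wd [a]))"
proof -
  have "theta c (wd [a]) = thl a" by (simp add: hmul_zero_right)
  moreover have "Hop (wd [a]) = wd [a]" by simp
  ultimately show ?thesis
    by (simp only: theta_hmul thl_def hmul_sc_right hmul_add_right)
qed

section \<open>Conjugating the recursion for phi\<close>

definition phi_step :: "rat \<Rightarrow> (hf \<Rightarrow> hf) \<Rightarrow> hf \<Rightarrow> hf" where
  "phi_step c \<Phi> p = theta c (\<Phi> p) - \<Phi> (theta c p)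
     + sc (1/2) (Rm hz (\<Phi> p) + \<Phi> (Rm hz p)) + sc c (d1 (\<Phi> p))"

definition psi_step :: "rat \<Rightarrow> (hf \<Rightarrow> hf) \<Rightarrow> hf \<Rightarrow> hf" where
  "psi_step c \<Psi> p = theta c (\<Psi> p) - \<Psi> (theta c p)
     - sc (1/2) (Rm hz (\<Psi> p) + \<Psi> (Rm hz p)) - sc c (\<Psi> (d1 p))"

definition sandwich :: "(hf \<Rightarrow> hf) \<Rightarrow> hf \<Rightarrow> hf" where
  "sandwich \<Phi> p = hmul (\<Phi> (hmul p hx)) hy"

lemma psi_sandwich: "psi c n = sandwich (phi c (n - 1))"
  by (simp add: psi_def sandwich_def Rm_def fun_eq_iff)

lemma phi_Suc_step: "phi c (Suc n) p = sc (1 / of_nat (Suc n)) (phi_step c (phi c n) p)"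
  by (simp add: phi_step_def)

lemma linop_phi: "linop (phi c n)"
proof (induction n)
  case 0
  show ?case using linop_id by (simp add: id_def)
next
  case (Suc n)
  show ?case
    unfolding phi.simps Rm_def
    by (intro linop_plus linop_minus linop_scale linop_hmul_left
        linop_comp[OF linop_theta Suc] linop_comp[OF Suc linop_theta]
        linop_comp[OF linop_hmul_left Suc] linop_comp[OF Suc linop_hmul_left]
        linop_comp[OF linop_d1 Suc])
qed

text \<open>Writing q = Phi(p x), the terms c d1(q) y cancel after
  moving theta past R_y, the terms 1/2 q z y cancel, and moving theta past R_x inside
  Phi leaves exactly -1/2 Psi(p z) - c Psi(d1 p).\<close>
lemma sandwich_phi_step:
  assumes lin: "linop \<Phi>"
  shows "sandwich (phi_step c \<Phi>) p = psi_step c (sandwich \<Phi>) p"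
proof -
  define q where "q = \<Phi> (hmul p hx)"
  have theta_past_y: "theta c (hmul q hy) = hmul (theta c q) hy
      + sc (1/2) (hmul q (hmul hy hz) + hmul q (hmul hz hy)) + sc c (hmul (d1 q) hy)"
    unfolding hy_def by (rule theta_hmul_letter)
  have theta_past_x: "\<Phi> (theta c (hmul p hx)) = \<Phi> (hmul (theta c p) hx)
      + sc (1/2) (\<Phi> (hmul p (hmul hx hz)) + \<Phi> (hmul p (hmul hz hx)))
      + sc c (\<Phi> (hmul (d1 p) hx))"
    unfolding hx_def theta_hmul_letter by (simp add: linop_add[OF lin] linop_sc[OF lin])
  show ?thesis
    unfolding sandwich_def phi_step_def psi_step_def Rm_def q_def[symmetric]
    by (simp add: theta_past_y theta_past_x hmul_add_left hmul_diff_left hmul_sc_left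
        hmul_assoc sc_add sc_diff algebra_simps)
qed

theorem mainTheorem4:
  fixes c :: rat
  shows "psi c 1 = Rm (wd [LX, LY])
    \<and> (\<forall>n\<ge>2. psi c n = (\<lambda>p. sc (1 / of_nat (n - 1))
          (theta c (psi c (n - 1) p) - psi c (n - 1) (theta c p)
           - sc (1/2) (Rm hz (psi c (n - 1) p) + psi c (n - 1) (Rm hz p))
           - sc c (psi c (n - 1) (d1 p)))))"
proof (intro conjI allI impI)
  show "psi c 1 = Rm (wd [LX, LY])"
    by (simp add: psi_def Rm_def fun_eq_iff hmul_assoc hx_def hy_def)
  fix n :: nat
  assume "2 \<le> n"
  then obtain m where n: "n = Suc (Suc m)" by (metis add_2_eq_Suc le_Suc_ex)
  have "psi c n p = sc (1 / of_nat (n - 1)) (psi_step c (psi c (n - 1)) p)" for p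
  proof -
    have "psi c n p = sandwich (phi c (Suc m)) p" by (simp add: psi_sandwich n)
    also have "\<dots> = sc (1 / of_nat (Suc m)) (sandwich (phi_step c (phi c m)) p)"
      by (simp only: sandwich_def phi_Suc_step hmul_sc_left)
    also have "\<dots> = sc (1 / of_nat (Suc m)) (psi_step c (sandwich (phi c m)) p)"
      by (simp add: sandwich_phi_step linop_phi)
    finally show ?thesis by (simp add: psi_sandwich n)
  qed
  then show "psi c n = (\<lambda>p. sc (1 / of_nat (n - 1))
          (theta c (psi c (n - 1) p) - psi c (n - 1) (theta c p)
           - sc (1/2) (Rm hz (psi c (n - 1) p) + psi c (n - 1) (Rm hz p))
           - sc c (psi c (n - 1) (d1 p))))"
    by (simp add: psi_step_def fun_eq_iff)
qed

end
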